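(* Let $P_Z=\mathcal N(0,I)$ on $\mathbb{R}^s$ and let $\mathcal T\colon\mathbb{R}^s\to\mathbb{R}^s$ be a bi-Lipschitz diffeomorphism, i.e. $\mathrm{Lip}(\mathcal T)<\infty$ and $\mathrm{Lip}(\mathcal T^{-1})<\infty$. Let $P_1,\dots,P_{N_p}\colon\mathbb{R}^d\to\mathbb{R}^s$ be patch-extraction operators, each selecting a fixed set of $s$ distinct coordinates of $x\in\mathbb{R}^d$, such that every coordinate $k\in\{1,\dots,d\}$ is selected by at least one $P_i$. Define $$\mathrm{patchNR}(x)=\frac{1}{s}\sum_{i=1}^{N_p}-\log\big(p_{\mathcal T_\#P_Z}(P_i(x))\big),\qquad x\in\mathbb{R}^d.$$ Then for every $\rho>0$, the function $\varphi(x)=\exp(-\rho\,\mathrm{patchNR}(x))$ belongs to $L^1(\mathbb{R}^d)$.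
   Context: $\mathcal T_\#P_Z=P_Z\circ\mathcal T^{-1}$ is the push-forward of $P_Z$ under $\mathcal T$, with density $p_{\mathcal T_\#P_Z}(\mathrm p)=p_Z(\mathcal T^{-1}(\mathrm p))\,|\det(\nabla\mathcal T^{-1}(\mathrm p))|$, where $p_Z$ is the standard normal density on $\mathbb{R}^s$. Images are vectorized as elements of $\mathbb{R}^d$, patches as elements of $\mathbb{R}^s$. *)

theory Defs
  imports "HOL-Analysis.Analysis"
begin

definition std_normal_density :: "real ^ 's \<Rightarrow> real" where
  "std_normal_density z =
     (2 * pi) powr (- real CARD('s) / 2) * exp (- (norm z)\<^sup>2 / 2)"

text \<open>Density of the push-forward of N(0,I) under T, given the inverse Tinv
  and its derivative Tinv': p(y) = p_Z(Tinv y) * |det (D Tinv (y))|.\<close>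
definition pushforward_density ::
  "(real ^ 's \<Rightarrow> real ^ 's) \<Rightarrow> (real ^ 's \<Rightarrow> real ^ 's \<Rightarrow> real ^ 's)
     \<Rightarrow> real ^ 's \<Rightarrow> real" where
  "pushforward_density Tinv Tinv' y =
     std_normal_density (Tinv y) * \<bar>det (matrix (Tinv' y))\<bar>"

definition patch :: "('s \<Rightarrow> 'd) \<Rightarrow> real ^ 'd \<Rightarrow> real ^ 's" where
  "patch idx x = (\<chi> j. x $ idx j)"

definition patchNR ::
  "(real ^ 's \<Rightarrow> real ^ 's) \<Rightarrow> (real ^ 's \<Rightarrow> real ^ 's \<Rightarrow> real ^ 's)
     \<Rightarrow> nat \<Rightarrow> (nat \<Rightarrow> 's \<Rightarrow> 'd) \<Rightarrow> real ^ 'd \<Rightarrow> real" where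
  "patchNR Tinv Tinv' Np idx x =
     (1 / real CARD('s)) *
       (\<Sum>i<Np. - ln (pushforward_density Tinv Tinv' (patch (idx i) x)))"

end

(*
  If K is a Lipschitz constant of T, then |Tinv y| >= |y - T 0| / K; since Tinv is Lipschitz,
  the entries of its Jacobian, hence its determinant, are bounded.  So the push-forward density
  is bounded by a Gaussian centred at T 0, and -ln of it grows at least quadratically in
  |y - T 0|.  Because the patches cover all coordinates, the sum over patches of |P_i x - T 0|^2
  dominates |x - d|^2 for a suitable d, so exp (- rho * patchNR x) is bounded by a Gaussian on R^d.

  Differentiability of T only serves to make the Jacobian of Tinv invertible, so that the density
  is positive and its logarithm is not the junk value ln 0 = 0.
*)
theory Submission
  imports Defs "HOL-Probability.Distributions"
begin

lemma jacobian_entry_difference_quotient: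
  fixes f :: "real^'n \<Rightarrow> real^'m"
  assumes "(f has_derivative f') (at y)"
  shows "((\<lambda>t. (f (y + t *\<^sub>R axis j 1) $ i - f y $ i) / t) \<longlongrightarrow> matrix f' $ i $ j) (at 0)"
proof -
  have "((\<lambda>t. y + t *\<^sub>R axis j 1) has_derivative (\<lambda>t. t *\<^sub>R axis j 1)) (at 0)"
    by (auto intro!: derivative_eq_intros)
  moreover have "(f has_derivative f') (at (y + 0 *\<^sub>R axis j 1))"
    using assms by simp
  ultimately have "((\<lambda>t. f (y + t *\<^sub>R axis j 1)) has_derivative (\<lambda>t. f' (t *\<^sub>R axis j 1))) (at 0)"
    by (rule has_derivative_compose)
  then have "((\<lambda>t. f (y + t *\<^sub>R axis j 1) $ i) has_derivative (\<lambda>t. f' (t *\<^sub>R axis j 1) $ i)) (at 0)"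
    by (rule bounded_linear.has_derivative[OF bounded_linear_vec_nth])
  moreover have "f' (t *\<^sub>R axis j 1) $ i = matrix f' $ i $ j * t" for t
    using has_derivative_linear[OF assms] by (simp add: linear_scale matrix_def)
  ultimately have "((\<lambda>t. f (y + t *\<^sub>R axis j 1) $ i) has_field_derivative matrix f' $ i $ j) (at 0)"
    by (simp add: has_field_derivative_def)
  then show ?thesis by (simp add: has_field_derivative_iff)
qed

lemma abs_jacobian_entry_le_lipschitz:
  fixes f :: "real^'n \<Rightarrow> real^'m"
  assumes "(f has_derivative f') (at y)" and "L-lipschitz_on UNIV f"
  shows "\<bar>matrix f' $ i $ j\<bar> \<le> L"
proof (rule tendsto_upperbound)
  show "((\<lambda>t. \<bar>(f (y + t *\<^sub>R axis j 1) $ i - f y $ i) / t\<bar>) \<longlongrightarrow> \<bar>matrix f' $ i $ j\<bar>) (at 0)"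
    by (intro tendsto_rabs jacobian_entry_difference_quotient assms)
  have "\<bar>(f (y + t *\<^sub>R axis j 1) $ i - f y $ i) / t\<bar> \<le> L" if "t \<noteq> 0" for t
  proof -
    have "\<bar>f (y + t *\<^sub>R axis j 1) $ i - f y $ i\<bar> \<le> dist (f (y + t *\<^sub>R axis j 1)) (f y)"
      by (metis dist_norm component_le_norm_cart vector_minus_component)
    also have "\<dots> \<le> L * \<bar>t\<bar>"
      using lipschitz_onD[OF assms(2), of "y + t *\<^sub>R axis j 1" y] by (simp add: dist_norm)
    finally show ?thesis using that by (simp add: divide_le_eq)
  qed
  then show "\<forall>\<^sub>F t in at 0. \<bar>(f (y + t *\<^sub>R axis j 1) $ i - f y $ i) / t\<bar> \<le> L"
    by (auto simp: eventually_at_filter)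
qed simp

lemma borel_measurable_jacobian_entry:
  fixes f :: "real^'n \<Rightarrow> real^'m"
  assumes "continuous_on UNIV f" and "\<And>y. (f has_derivative f' y) (at y)"
  shows "(\<lambda>y. matrix (f' y) $ i $ j) \<in> borel_measurable borel"
proof (rule borel_measurable_LIMSEQ_real)
  have "filterlim (\<lambda>n. inverse (real (Suc n))) (at 0) sequentially"
    by (intro filterlim_atI LIMSEQ_inverse_real_of_nat) simp
  from filterlim_compose[OF jacobian_entry_difference_quotient[OF assms(2)] this]
  show "(\<lambda>n. real (Suc n) * (f (y + inverse (real (Suc n)) *\<^sub>R axis j 1) $ i - f y $ i))
      \<longlonglongrightarrow> matrix (f' y) $ i $ j" for y
    by (simp add: o_def divide_inverse_commute)
  show "(\<lambda>y. real (Suc n) * (f (y + inverse (real (Suc n)) *\<^sub>R axis j 1) $ i - f y $ i))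
      \<in> borel_measurable borel" for n
    by (intro borel_measurable_continuous_onI continuous_intros continuous_on_compose2[OF assms(1)])
      auto
qed

lemma abs_det_le_entry_bound:
  fixes A :: "'a::linordered_idom^'n^'n"
  assumes "\<And>i j. \<bar>A $ i $ j\<bar> \<le> B"
  shows "\<bar>det A\<bar> \<le> fact CARD('n) * B ^ CARD('n)"
proof -
  have "\<bar>det A\<bar> \<le> (\<Sum>p | p permutes (UNIV::'n set). \<bar>of_int (sign p) * (\<Prod>i\<in>UNIV. A $ i $ p i)\<bar>)"
    unfolding det_def by (rule sum_abs)
  also have "\<dots> \<le> (\<Sum>p | p permutes (UNIV::'n set). B ^ CARD('n))"
  proof (rule sum_mono)
    fix p :: "'n \<Rightarrow> 'n"
    have "(\<Prod>i\<in>UNIV. \<bar>A $ i $ p i\<bar>) \<le> (\<Prod>i\<in>(UNIV::'n set). B)"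
      by (intro prod_mono) (auto simp: assms)
    then show "\<bar>of_int (sign p) * (\<Prod>i\<in>UNIV. A $ i $ p i)\<bar> \<le> B ^ CARD('n)"
      by (simp add: abs_mult abs_prod sign_def)
  qed
  also have "\<dots> = fact CARD('n) * B ^ CARD('n)"
    by (simp add: card_permutations)
  finally show ?thesis .
qed

lemma det_jacobian_right_inverse_nonzero:
  fixes f g :: "real^'n \<Rightarrow> real^'n"
  assumes "\<And>y. f (g y) = y"
    and "(g has_derivative g') (at y)" and "(f has_derivative f') (at (g y))"
  shows "det (matrix g') \<noteq> 0"
proof -
  have "((f \<circ> g) has_derivative (f' \<circ> g')) (at y)"
    using assms(2,3) by (rule diff_chain_at)
  moreover have "f \<circ> g = id"
    using assms(1) by auto
  ultimately have "f' \<circ> g' = id"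
    using has_derivative_unique has_derivative_id by metis
  then have "inj g'"
    by (metis inj_on_id inj_on_imageI2)
  then show ?thesis
    using det_nz_iff_inj has_derivative_linear[OF assms(2)] by blast
qed

lemma ln_pushforward_density_le:
  fixes T Tinv :: "real^'s \<Rightarrow> real^'s"
  assumes inverse: "\<And>y. T (Tinv y) = y"
    and T_deriv: "\<And>x. (T has_derivative T' x) (at x)"
    and Tinv_deriv: "\<And>y. (Tinv has_derivative Tinv' y) (at y)"
    and lip_T: "K-lipschitz_on UNIV T" and "K > 0"
    and lip_Tinv: "L-lipschitz_on UNIV Tinv"
  shows "ln (pushforward_density Tinv Tinv' y)
    \<le> ln ((2 * pi) powr (- real CARD('s) / 2) * (fact CARD('s) * L ^ CARD('s)))
       - (norm (y - T 0))\<^sup>2 / (2 * K\<^sup>2)"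
proof -
  define C where "C = (2 * pi) powr (- real CARD('s) / 2)"
  define D where "D = fact CARD('s) * L ^ CARD('s)"
  have det_nonzero: "det (matrix (Tinv' y)) \<noteq> 0"
    by (rule det_jacobian_right_inverse_nonzero[OF inverse Tinv_deriv T_deriv])
  have det_bound: "\<bar>det (matrix (Tinv' y))\<bar> \<le> D"
    unfolding D_def by (intro abs_det_le_entry_bound abs_jacobian_entry_le_lipschitz[OF Tinv_deriv lip_Tinv])
  have "C > 0" "D > 0"
    using det_nonzero det_bound unfolding C_def by auto
  have "norm (y - T 0) \<le> K * norm (Tinv y)"
    using lipschitz_on_normD[OF lip_T, of "Tinv y" 0] inverse by simp
  then have "(norm (y - T 0))\<^sup>2 \<le> (K * norm (Tinv y))\<^sup>2"
    by (simp add: power_mono)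
  then have gauss: "(norm (y - T 0))\<^sup>2 / (2 * K\<^sup>2) \<le> (norm (Tinv y))\<^sup>2 / 2"
    using \<open>K > 0\<close> by (simp add: field_simps)
  have "ln (pushforward_density Tinv Tinv' y)
      = ln C - (norm (Tinv y))\<^sup>2 / 2 + ln \<bar>det (matrix (Tinv' y))\<bar>"
    using \<open>C > 0\<close> det_nonzero
    by (simp add: pushforward_density_def Defs.std_normal_density_def C_def ln_mult)
  also have "\<dots> \<le> ln C - (norm (y - T 0))\<^sup>2 / (2 * K\<^sup>2) + ln D"
    using gauss ln_le_cancel_iff[of "\<bar>det (matrix (Tinv' y))\<bar>" D] det_bound det_nonzero \<open>D > 0\<close>
    by linarith
  also have "\<dots> = ln (C * D) - (norm (y - T 0))\<^sup>2 / (2 * K\<^sup>2)"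
    using \<open>C > 0\<close> \<open>D > 0\<close> by (simp add: ln_mult)
  finally show ?thesis
    unfolding C_def D_def .
qed

lemma power2_norm_vec: "(norm (v::real^'n))\<^sup>2 = (\<Sum>i\<in>UNIV. (v $ i)\<^sup>2)"
  unfolding power2_norm_eq_inner inner_vec_def by (simp add: power2_eq_square)

text \<open>Each coordinate k of x is read off through one chosen patch position, and d copies
  the corresponding entry of c; the remaining patch entries only add nonnegative terms.\<close>
lemma patch_cover_sum_norm_ge:
  fixes idx :: "nat \<Rightarrow> 's::finite \<Rightarrow> 'd::finite"
  assumes cover: "\<And>k. \<exists>i<Np. k \<in> range (idx i)"
  obtains d :: "real^'d"
    where "\<And>x. (norm (x - d))\<^sup>2 \<le> (\<Sum>i<Np. (norm (patch (idx i) x - c))\<^sup>2)"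
proof -
  have "\<forall>k. \<exists>q. fst q < Np \<and> idx (fst q) (snd q) = k"
    using cover by (metis fst_conv snd_conv rangeE)
  then obtain sel where "\<forall>k. fst (sel k) < Np \<and> idx (fst (sel k)) (snd (sel k)) = k"
    by (rule exE[OF choice])
  then have sel: "fst (sel k) < Np" "idx (fst (sel k)) (snd (sel k)) = k" for k
    by auto
  have "inj sel"
    by (rule inj_on_inverseI[where g = "\<lambda>(i, j). idx i j"]) (simp add: sel case_prod_beta)
  define d :: "real^'d" where "d = (\<chi> k. c $ snd (sel k))"
  have "(norm (x - d))\<^sup>2 \<le> (\<Sum>i<Np. (norm (patch (idx i) x - c))\<^sup>2)" for x
  proof -
    define g where "g = (\<lambda>(i, j). (x $ idx i j - c $ j)\<^sup>2)"
    have "(norm (x - d))\<^sup>2 = (\<Sum>k\<in>UNIV. g (sel k))"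
      unfolding power2_norm_vec g_def d_def using sel by (simp add: case_prod_beta)
    also have "\<dots> = (\<Sum>q\<in>range sel. g q)"
      by (simp add: sum.reindex[OF \<open>inj sel\<close>])
    also have "\<dots> \<le> (\<Sum>q\<in>{..<Np} \<times> UNIV. g q)"
      by (rule sum_mono2) (simp_all add: image_subset_iff mem_Times_iff sel(1) g_def split: prod.split)
    also have "\<dots> = (\<Sum>i<Np. (norm (patch (idx i) x - c))\<^sup>2)"
      unfolding power2_norm_vec g_def patch_def by (simp add: sum.cartesian_product)
    finally show ?thesis .
  qed
  then show thesis by (rule that)
qed

lemma patchNR_lower_bound:
  fixes Tinv :: "real^'s \<Rightarrow> real^'s"
  assumes ln_density: "\<And>y. ln (pushforward_density Tinv Tinv' y) \<le> A - (norm (y - c))\<^sup>2 / b"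
    and "b \<ge> 0"
    and cover: "(norm (x - d))\<^sup>2 \<le> (\<Sum>i<Np. (norm (patch (idx i) x - c))\<^sup>2)"
  shows "((norm (x - d))\<^sup>2 / b - real Np * A) / real CARD('s) \<le> patchNR Tinv Tinv' Np idx x"
proof -
  have "(norm (x - d))\<^sup>2 / b - real Np * A \<le> (\<Sum>i<Np. (norm (patch (idx i) x - c))\<^sup>2 / b - A)"
    using divide_right_mono[OF cover \<open>b \<ge> 0\<close>] by (simp add: sum_subtractf sum_divide_distrib)
  also have "\<dots> \<le> (\<Sum>i<Np. - ln (pushforward_density Tinv Tinv' (patch (idx i) x)))"
    by (intro sum_mono) (smt (verit) ln_density)
  finally show ?thesis
    unfolding patchNR_def by (simp add: divide_right_mono)
qed

lemma borel_measurable_patchNR: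
  fixes Tinv :: "real^'s \<Rightarrow> real^'s" and idx :: "nat \<Rightarrow> 's \<Rightarrow> 'd::finite"
  assumes "continuous_on UNIV Tinv" and "\<And>y. (Tinv has_derivative Tinv' y) (at y)"
  shows "patchNR Tinv Tinv' Np idx \<in> borel_measurable borel"
proof -
  have [measurable]: "Tinv \<in> borel_measurable borel"
    using assms(1) by (rule borel_measurable_continuous_onI)
  have [measurable]: "(\<lambda>y. det (matrix (Tinv' y))) \<in> borel_measurable borel"
    unfolding det_def using borel_measurable_jacobian_entry[OF assms] by measurable
  have [measurable]: "patch (idx i) \<in> borel_measurable borel" for i
    unfolding patch_def by (intro borel_measurable_continuous_onI continuous_intros)
  show ?thesis
    unfolding patchNR_def pushforward_density_def Defs.std_normal_density_def by measurable
qed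

lemma integrable_exp_neg_sq_real:
  assumes "B > 0"
  shows "integrable lborel (\<lambda>t::real. exp (- B * (t - \<mu>)\<^sup>2))"
proof -
  define \<sigma> where "\<sigma> = sqrt (1 / (2 * B))"
  have "\<sigma> > 0" and \<sigma>2: "\<sigma>\<^sup>2 = 1 / (2 * B)"
    unfolding \<sigma>_def using assms by auto
  have "(\<lambda>t. exp (- B * (t - \<mu>)\<^sup>2)) = (\<lambda>t. sqrt (2 * pi * \<sigma>\<^sup>2) * normal_density \<mu> \<sigma> t)"
    using assms \<sigma>2 \<open>\<sigma> > 0\<close> by (simp add: normal_density_def mult.commute)
  then show ?thesis
    using integrable_normal_density[OF \<open>\<sigma> > 0\<close>, of \<mu>] by simp
qed

lemma integrable_exp_neg_sq_dist:
  fixes d :: "'a::euclidean_space"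
  assumes "B > 0"
  shows "integrable lborel (\<lambda>x. exp (- B * (norm (x - d))\<^sup>2))"
proof (rule integrableI_bounded)
  show "(\<lambda>x. exp (- B * (norm (x - d))\<^sup>2)) \<in> borel_measurable lborel"
    by measurable
  have "(norm (x - d))\<^sup>2 = (\<Sum>b\<in>Basis. (x \<bullet> b - d \<bullet> b)\<^sup>2)" for x
    unfolding power2_norm_eq_inner
    by (subst euclidean_inner) (simp add: inner_diff_left power2_eq_square)
  then have product: "exp (- (B * (norm (x - d))\<^sup>2)) = (\<Prod>b\<in>Basis. exp (- (B * (x \<bullet> b - d \<bullet> b)\<^sup>2)))" for x
    by (simp add: exp_sum sum_distrib_left sum_negf[symmetric])
  have "(\<integral>\<^sup>+x. ennreal (norm (exp (- B * (norm (x - d))\<^sup>2))) \<partial>lborel)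
      = (\<integral>\<^sup>+x. (\<Prod>b\<in>Basis. (\<lambda>b t. ennreal (exp (- B * (t - d \<bullet> b)\<^sup>2))) b (x \<bullet> b)) \<partial>lborel)"
    by (simp add: product prod_ennreal prod_nonneg)
  also have "\<dots> = (\<Prod>b\<in>Basis. (\<integral>\<^sup>+t. ennreal (exp (- B * (t - d \<bullet> b)\<^sup>2)) \<partial>lborel))"
    by (rule nn_integral_lborel_prod) auto
  also have "\<dots> = (\<Prod>b\<in>(Basis::'a set). ennreal (\<integral>t. exp (- B * (t - d \<bullet> b)\<^sup>2) \<partial>lborel))"
    by (intro prod.cong refl nn_integral_eq_integral integrable_exp_neg_sq_real assms) auto
  also have "\<dots> < \<infinity>"
    by (subst prod_ennreal) (auto intro!: integral_nonneg_AE)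
  finally show "(\<integral>\<^sup>+x. ennreal (norm (exp (- B * (norm (x - d))\<^sup>2))) \<partial>lborel) < \<infinity>" .
qed

lemma integrable_exp_neg_patchNR:
  fixes Tinv :: "real^'s \<Rightarrow> real^'s" and idx :: "nat \<Rightarrow> 's \<Rightarrow> 'd::finite"
  assumes ln_density: "\<And>y. ln (pushforward_density Tinv Tinv' y) \<le> A - (norm (y - c))\<^sup>2 / b"
    and "b > 0" and "\<rho> > 0"
    and cover: "\<And>k. \<exists>i<Np. k \<in> range (idx i)"
    and "continuous_on UNIV Tinv" and "\<And>y. (Tinv has_derivative Tinv' y) (at y)"
  shows "integrable lebesgue (\<lambda>x. exp (- \<rho> * patchNR Tinv Tinv' Np idx x))"
proof -
  obtain d where patches: "\<And>x. (norm (x - d))\<^sup>2 \<le> (\<Sum>i<Np. (norm (patch (idx i) x - c))\<^sup>2)"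
    using patch_cover_sum_norm_ge[OF cover] by blast
  define C where "C = exp (\<rho> * real Np * A / real CARD('s))"
  define B where "B = \<rho> / (b * real CARD('s))"
  have bound: "exp (- \<rho> * patchNR Tinv Tinv' Np idx x) \<le> C * exp (- B * (norm (x - d))\<^sup>2)" for x
  proof -
    have "- \<rho> * patchNR Tinv Tinv' Np idx x
        \<le> - \<rho> * (((norm (x - d))\<^sup>2 / b - real Np * A) / real CARD('s))"
      using mult_left_mono[OF patchNR_lower_bound[OF ln_density less_imp_le[OF \<open>b > 0\<close>] patches]
          less_imp_le[OF \<open>\<rho> > 0\<close>]]
      by (simp only: mult_minus_left neg_le_iff_le)
    also have "\<dots> = \<rho> * real Np * A / real CARD('s) - B * (norm (x - d))\<^sup>2"
      unfolding B_def by (simp add: field_simps)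
    finally show ?thesis
      unfolding C_def by (simp add: mult_exp_exp)
  qed
  have measurable: "(\<lambda>x. exp (- \<rho> * patchNR Tinv Tinv' Np idx x)) \<in> borel_measurable lborel"
    using borel_measurable_patchNR[OF assms(5,6)] by measurable
  have "integrable lborel (\<lambda>x. exp (- \<rho> * patchNR Tinv Tinv' Np idx x))"
  proof (rule Bochner_Integration.integrable_bound[OF _ measurable])
    show "integrable lborel (\<lambda>x. C * exp (- B * (norm (x - d))\<^sup>2))"
      using \<open>b > 0\<close> \<open>\<rho> > 0\<close> unfolding B_def by (intro integrable_mult_right integrable_exp_neg_sq_dist) simp
  qed (use bound in \<open>simp add: C_def\<close>)
  then show ?thesis
    using measurable by (simp add: integrable_completion)
qed

theorem proposition1:
  fixes T Tinv :: "real ^ 's \<Rightarrow> real ^ 's"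
    and T' Tinv' :: "real ^ 's \<Rightarrow> real ^ 's \<Rightarrow> real ^ 's"
    and Np :: nat
    and idx :: "nat \<Rightarrow> 's \<Rightarrow> 'd::finite"
    and \<rho> :: real
  assumes bij_T: "bij T"
    and Tinv_def: "Tinv = inv T"
    and T_deriv: "\<And>x. (T has_derivative T' x) (at x)"
    and Tinv_deriv: "\<And>y. (Tinv has_derivative Tinv' y) (at y)"
    and T_lip: "\<exists>L. L-lipschitz_on UNIV T"
    and Tinv_lip: "\<exists>L. L-lipschitz_on UNIV Tinv"
    and idx_inj: "\<And>i. i < Np \<Longrightarrow> inj (idx i)"
    and cover: "\<And>k. \<exists>i<Np. k \<in> range (idx i)"
    and rho_pos: "\<rho> > 0"
  shows "integrable lebesgue (\<lambda>x::real ^ 'd. exp (- \<rho> * patchNR Tinv Tinv' Np idx x))"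
proof -
  obtain K where lip_T: "K-lipschitz_on UNIV T" and "K > 0"
  proof -
    obtain K0 where K0: "K0-lipschitz_on UNIV T"
      using T_lip by blast
    show thesis
      using lipschitz_on_mono[OF K0 order_refl, of "K0 + 1"] lipschitz_on_nonneg[OF K0] that by simp
  qed
  obtain L where lip_Tinv: "L-lipschitz_on UNIV Tinv"
    using Tinv_lip by blast
  have inverse: "T (Tinv y) = y" for y
    unfolding Tinv_def using bij_T by (simp add: bij_is_surj surj_f_inv_f)
  show ?thesis
    by (rule integrable_exp_neg_patchNR[OF
          ln_pushforward_density_le[OF inverse T_deriv Tinv_deriv lip_T \<open>K > 0\<close> lip_Tinv] _ rho_pos cover
          lipschitz_on_continuous_on[OF lip_Tinv] Tinv_deriv])
      (use \<open>K > 0\<close> in simp)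
qed

end
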